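(* Identify the graded dual $\mathcal{A}^{\circledast}=\bigoplus_n(\mathbb K T_n)^*$ with $\mathcal{A}$ via the pairing $\langle t,s\rangle=\delta_{t,s}$ on trees. Let $\Delta$ on $\mathcal A^{\circledast}$ be the transpose of $*$, i.e. $\langle\Delta(t),u\otimes v\rangle=\langle t,u*v\rangle$ for all trees $u,v$, and for $\ltimes\in\{\prec,\cdot,\succ\}$ and a tree $t\ne|$ let $\Delta_\ltimes(t)$ be defined by $\langle\Delta_\ltimes(t),u\otimes v\rangle=\langle t,u\ltimes v\rangle$ for all trees $u,v$ not both equal to $|$. Then for every tree $t\neq|$ with $N$ leaves, $$\Delta(t)=\sum_{m=1}^{N}{}^m t\otimes t^m,$$ and $\Delta_\prec(t)$ (resp. $\Delta_\succ(t)$, resp. $\Delta_\cdot(t)$) is the sum of the terms ${}^mt\otimes t^m$ for which the path from the root to the $m$-th leaf leaves the root vertex through its right-most child (resp. through its left-most child, resp. through a child which is neither the left-most nor the right-most).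
   Context: Trees: planar rooted trees in which every internal vertex has at least two children; the root vertex hangs from a trunk edge; leaves are edges without upper vertex; $|$ is the one-leaf tree; $T_n$ = trees with $n+1$ leaves; $\mathcal A=\bigoplus_n\mathbb K T_n$. Products on $\mathcal A$: $x_0\vee\cdots\vee x_k$ ($k\ge1$) grafts trees left to right on a new root vertex; for $x=x^{(0)}\vee\cdots\vee x^{(k)}$, $y=y^{(0)}\vee\cdots\vee y^{(l)}$: $x\prec y=x^{(0)}\vee\cdots\vee x^{(k-1)}\vee(x^{(k)}*y)$, $x\cdot y=x^{(0)}\vee\cdots\vee x^{(k-1)}\vee(x^{(k)}*y^{(0)})\vee y^{(1)}\vee\cdots\vee y^{(l)}$, $x\succ y=(x*y^{(0)})\vee y^{(1)}\vee\cdots\vee y^{(l)}$, $*=\prec+\cdot+\succ$, $|*z=z*|=z$; augmented conventions for $a\ne|$: $|\prec a=0$, $a\prec|=a$, $|\succ a=a$, $a\succ|=0$, $|\cdot a=a\cdot|=0$. Lightning splitting: number the leaves of $t$ from $1$ to $N$ left to right and let $\gamma_m$ be the path from the root to leaf $m$. ${}^mt$ is obtained by deleting, at every internal vertex of $\gamma_m$, all subtrees hanging from children strictly to the right of $\gamma_m$, then contracting every vertex left with a single child; $t^m$ is obtained likewise by deleting everything strictly to the left of $\gamma_m$. Thus ${}^mt$ has $m$ leaves and $t^m$ has $N-m+1$ leaves. *)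

theory Defs
  imports Main "HOL-Library.Multiset" "HOL-Library.Function_Algebras"
begin

text \<open>Planar rooted trees: Leaf is the one-leaf tree (a bare trunk); Node cs is a root
vertex carrying the subtrees cs from left to right.\<close>

datatype ptree = Leaf | Node "ptree list"

fun wf_tree :: "ptree \<Rightarrow> bool" where
  "wf_tree Leaf = True"
| "wf_tree (Node cs) = (2 \<le> length cs \<and> list_all wf_tree cs)"

fun nleaves :: "ptree \<Rightarrow> nat" where
  "nleaves Leaf = 1"
| "nleaves (Node cs) = sum_list (map nleaves cs)"

lemma size_mem_le: "x \<in> set xs \<Longrightarrow> size x \<le> size_list size xs"
  by (induction xs) auto

lemma size_last_less: "xs \<noteq> [] \<Longrightarrow> size (last xs) < size (Node xs)"
  using size_mem_le[of "last xs" xs] by simp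

lemma size_hd_less: "xs \<noteq> [] \<Longrightarrow> size (hd xs) < size (Node xs)"
  using size_mem_le[of "hd xs" xs] by simp

lemma size_nth_less: "i < length xs \<Longrightarrow> size (xs ! i) < size (Node xs)"
  using size_mem_le[of "xs ! i" xs] by simp

lemma size_last_hd_less: "xs \<noteq> [] \<Longrightarrow> ys \<noteq> [] \<Longrightarrow>
   size (last xs) + size (hd ys) < size (Node xs) + size (Node ys)"
  using size_last_less[of xs] size_hd_less[of ys] by linarith

text \<open>The product * on trees (extended bilinearly; all structure constants are natural
numbers, so a linear combination with nonnegative integer coefficients is a multiset).\<close>

function star :: "ptree \<Rightarrow> ptree \<Rightarrow> ptree multiset" where
  "star Leaf y = {#y#}"
| "star (Node xs) Leaf = {#Node xs#}"
| "star (Node xs) (Node ys) =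
     (if xs = [] \<or> ys = [] then {#} else
        image_mset (\<lambda>z. Node (butlast xs @ [z])) (star (last xs) (Node ys))
      + image_mset (\<lambda>z. Node (butlast xs @ [z] @ tl ys)) (star (last xs) (hd ys))
      + image_mset (\<lambda>z. Node (z # tl ys)) (star (Node xs) (hd ys)))"
  by pat_completeness auto
termination
  by (relation "measure (\<lambda>(x, y). size x + size y)")
     (use size_last_less size_hd_less size_last_hd_less in force)+

text \<open>The three products, with the augmented conventions for the one-leaf tree.\<close>

fun lprod :: "ptree \<Rightarrow> ptree \<Rightarrow> ptree multiset" where
  "lprod Leaf y = {#}"
| "lprod (Node xs) Leaf = {#Node xs#}"
| "lprod (Node xs) (Node ys) = image_mset (\<lambda>z. Node (butlast xs @ [z])) (star (last xs) (Node ys))"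

fun dprod :: "ptree \<Rightarrow> ptree \<Rightarrow> ptree multiset" where
  "dprod Leaf y = {#}"
| "dprod (Node xs) Leaf = {#}"
| "dprod (Node xs) (Node ys) = image_mset (\<lambda>z. Node (butlast xs @ [z] @ tl ys)) (star (last xs) (hd ys))"

fun rprod :: "ptree \<Rightarrow> ptree \<Rightarrow> ptree multiset" where
  "rprod Leaf y = {#y#}"
| "rprod (Node xs) Leaf = {#}"
| "rprod (Node xs) (Node ys) = image_mset (\<lambda>z. Node (z # tl ys)) (star (Node xs) (hd ys))"

text \<open>Lightning splitting.  cidx cs m is the (0-based) index of the child of the root
through which the path to leaf m (1-based) leaves the root.\<close>

fun cidx :: "ptree list \<Rightarrow> nat \<Rightarrow> nat" where
  "cidx [] m = 0"
| "cidx (c # cs) m = (if m \<le> nleaves c then 0 else Suc (cidx cs (m - nleaves c)))"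

definition exit_idx :: "ptree list \<Rightarrow> nat \<Rightarrow> nat" where
  "exit_idx cs m = min (cidx cs m) (length cs - 1)"

lemma exit_idx_less: "cs \<noteq> [] \<Longrightarrow> exit_idx cs m < length cs"
  by (cases cs) (auto simp: exit_idx_def)

lemma size_exit_less: "cs \<noteq> [] \<Longrightarrow> size (cs ! exit_idx cs m) < Suc (size_list size cs)"
  using size_nth_less[OF exit_idx_less[of cs m]] by simp

function lsplit :: "ptree \<Rightarrow> nat \<Rightarrow> ptree" where
  "lsplit Leaf m = Leaf"
| "lsplit (Node cs) m =
     (if cs = [] then Leaf else
      (let j = exit_idx cs m; m' = m - sum_list (map nleaves (take j cs)) in
       if j = 0 then lsplit (cs ! j) m' else Node (take j cs @ [lsplit (cs ! j) m'])))"
  by pat_completeness auto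
termination
  by (relation "measure (\<lambda>(x, m). size x)")
     (auto simp: size_exit_less, metis size_exit_less)

function rsplit :: "ptree \<Rightarrow> nat \<Rightarrow> ptree" where
  "rsplit Leaf m = Leaf"
| "rsplit (Node cs) m =
     (if cs = [] then Leaf else
      (let j = exit_idx cs m; m' = m - sum_list (map nleaves (take j cs)) in
       if j = length cs - 1 then rsplit (cs ! j) m'
       else Node (rsplit (cs ! j) m' # drop (Suc j) cs)))"
  by pat_completeness auto
termination
  by (relation "measure (\<lambda>(x, m). size x)")
     (auto simp: size_exit_less)+

text \<open>Children of the root, and the elementary tensor u \<otimes> v in A \<otimes> A,
the latter identified with finitely supported functions on pairs of trees.\<close>

fun children :: "ptree \<Rightarrow> ptree list" where
  "children Leaf = []"
| "children (Node cs) = cs"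

definition tens :: "ptree \<Rightarrow> ptree \<Rightarrow> (ptree \<times> ptree \<Rightarrow> 'k::field)" where
  "tens u v = (\<lambda>p. if p = (u, v) then 1 else 0)"

text \<open>Transposed coproducts: the coefficient of u \<otimes> v in Delta(t) is the
coefficient of t in u * v (zero outside pairs of well-formed trees), and likewise for the
half-coproducts, which are only defined on pairs not both equal to Leaf.\<close>

definition Delta :: "ptree \<Rightarrow> (ptree \<times> ptree \<Rightarrow> 'k::field)" where
  "Delta t = (\<lambda>(u, v). if wf_tree u \<and> wf_tree v then of_nat (count (star u v) t) else 0)"

definition Delta_op :: "(ptree \<Rightarrow> ptree \<Rightarrow> ptree multiset) \<Rightarrow> ptree \<Rightarrow> (ptree \<times> ptree \<Rightarrow> 'k::field)" where
  "Delta_op op t = (\<lambda>(u, v). if wf_tree u \<and> wf_tree v \<and> \<not> (u = Leaf \<and> v = Leaf)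
                              then of_nat (count (op u v) t) else 0)"

end

theory Submission
  imports Defs
begin

(*
  Let splittings t be the multiset of the pairs (lsplit t m, rsplit t m), 1 \<le> m \<le> nleaves t.
  The claim is that the multiplicity of t in u * v equals that of (u, v) in splittings t, and
  likewise for the three half-products.  Group the leaves of t = Node cs by the child cs ! j in
  which they lie: the splittings of t at the leaves of cs ! j are those (a, b) of cs ! j with a
  grafted onto the children left of j and b onto the children right of j (split_block cs j).
  For u = Node (ps @ [a]) and v = Node (b # ss) the three summands u \<prec> v, u \<cdot> v, u \<succ> v of
  u * v put a * v into the last child, a * b into a middle child and u * b into the first child
  of the root, which matches the blocks of the last, a middle and the first child; so the claim
  follows by induction along the recursion of *.
*)

declare lsplit.simps [simp del] rsplit.simps [simp del]

lemma count_image_mset_inj: "inj f \<Longrightarrow> count (image_mset f M) (f x) = count M x"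
  by (induction M) (auto dest: injD)

lemma count_image_mset_notin_range: "y \<notin> range f \<Longrightarrow> count (image_mset f M) y = 0"
  by (induction M) auto

lemma sum_lessThan_first_middle_last:
  fixes f :: "nat \<Rightarrow> 'a::comm_monoid_add"
  assumes "2 \<le> n"
  shows "(\<Sum>j<n. f j) = f 0 + (\<Sum>j\<in>{1..<n - 1}. f j) + f (n - 1)"
proof -
  obtain k where "n = Suc (Suc k)"
    using assms by (metis add_2_eq_Suc le_Suc_ex)
  then show ?thesis
    by (simp add: lessThan_atLeast0 sum.atLeast_Suc_lessThan sum.atLeastLessThan_Suc ac_simps)
qed

lemma sum_fun_apply: "(\<Sum>m\<in>A. f m) p = (\<Sum>m\<in>A. f m p)"
  by (induction A rule: infinite_finite_induct) auto

definition splittings :: "ptree \<Rightarrow> (ptree \<times> ptree) multiset" where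
  "splittings t = mset (map (\<lambda>m. (lsplit t m, rsplit t m)) [1..<Suc (nleaves t)])"

definition leaf_offset :: "ptree list \<Rightarrow> nat \<Rightarrow> nat" where
  "leaf_offset cs j = sum_list (map nleaves (take j cs))"

lemma leaf_offset_0 [simp]: "leaf_offset cs 0 = 0"
  by (simp add: leaf_offset_def)

lemma leaf_offset_Cons_Suc [simp]: "leaf_offset (c # cs) (Suc j) = nleaves c + leaf_offset cs j"
  by (simp add: leaf_offset_def)

definition graft_left :: "ptree list \<Rightarrow> nat \<Rightarrow> ptree \<Rightarrow> ptree" where
  "graft_left cs j a = (if j = 0 then a else Node (take j cs @ [a]))"

definition graft_right :: "ptree list \<Rightarrow> nat \<Rightarrow> ptree \<Rightarrow> ptree" where
  "graft_right cs j b = (if j = length cs - 1 then b else Node (b # drop (Suc j) cs))"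

definition split_block :: "ptree list \<Rightarrow> nat \<Rightarrow> (ptree \<times> ptree) multiset" where
  "split_block cs j =
     image_mset (map_prod (graft_left cs j) (graft_right cs j)) (splittings (cs ! j))"

lemma cidx_leaf_offset:
  "j < length cs \<Longrightarrow> 0 < m \<Longrightarrow> m \<le> nleaves (cs ! j) \<Longrightarrow> cidx cs (leaf_offset cs j + m) = j"
proof (induction cs arbitrary: j)
  case (Cons c cs)
  then show ?case
    by (cases j) auto
qed simp

lemma exit_idx_leaf_offset:
  "j < length cs \<Longrightarrow> 0 < m \<Longrightarrow> m \<le> nleaves (cs ! j) \<Longrightarrow> exit_idx cs (leaf_offset cs j + m) = j"
  by (simp add: exit_idx_def cidx_leaf_offset)

lemma splitting_Node_leaf_offset:
  assumes "j < length cs" "0 < m" "m \<le> nleaves (cs ! j)"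
  shows "(lsplit (Node cs) (leaf_offset cs j + m), rsplit (Node cs) (leaf_offset cs j + m))
       = map_prod (graft_left cs j) (graft_right cs j) (lsplit (cs ! j) m, rsplit (cs ! j) m)"
  using assms exit_idx_leaf_offset[OF assms]
  by (auto simp: lsplit.simps rsplit.simps Let_def graft_left_def graft_right_def leaf_offset_def)

lemma upt_leaves_Node:
  "[Suc a..<Suc (a + nleaves (Node cs))]
   = concat (map (\<lambda>j. map (\<lambda>m. a + leaf_offset cs j + m) [1..<Suc (nleaves (cs ! j))])
       [0..<length cs])"
proof (induction cs arbitrary: a)
  case (Cons c cs)
  have shift: "[Suc a..<Suc (a + n)] = map (\<lambda>m. a + m) [1..<Suc n]" for n
    by (induction n) auto
  have "[Suc a..<Suc (a + nleaves (Node (c # cs)))]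
      = [Suc a..<Suc (a + nleaves c)]
        @ [Suc (a + nleaves c)..<Suc (a + nleaves c + nleaves (Node cs))]"
    using upt_add_eq_append[of "Suc a" "Suc (a + nleaves c)"] by (simp add: add.assoc del: upt_Suc)
  also have "\<dots> = map (\<lambda>m. a + m) [1..<Suc (nleaves c)]
        @ concat (map (\<lambda>j. map (\<lambda>m. a + nleaves c + leaf_offset cs j + m)
            [1..<Suc (nleaves (cs ! j))]) [0..<length cs])"
    by (simp only: shift Cons.IH)
  finally have "[Suc a..<Suc (a + nleaves (Node (c # cs)))]
      = map (\<lambda>m. a + m) [1..<Suc (nleaves c)]
        @ concat (map (\<lambda>j. map (\<lambda>m. a + nleaves c + leaf_offset cs j + m)
            [1..<Suc (nleaves (cs ! j))]) [0..<length cs])" .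
  moreover have "[0..<length (c # cs)] = 0 # map Suc [0..<length cs]"
    by (simp add: map_Suc_upt upt_conv_Cons del: upt_Suc)
  ultimately show ?case
    by (simp add: comp_def ac_simps del: upt_Suc)
qed simp

lemma mset_filter_splittings_block:
  assumes "j < length cs"
  shows "mset (map (\<lambda>m. (lsplit (Node cs) m, rsplit (Node cs) m))
           (filter (\<lambda>m. Q (exit_idx cs m))
             (map (\<lambda>m. leaf_offset cs j + m) [1..<Suc (nleaves (cs ! j))])))
         = (if Q j then split_block cs j else {#})"
proof -
  let ?block = "[1..<Suc (nleaves (cs ! j))]"
  have filtered: "filter (\<lambda>m. Q (exit_idx cs m)) (map (\<lambda>m. leaf_offset cs j + m) ?block)
      = (if Q j then map (\<lambda>m. leaf_offset cs j + m) ?block else [])"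
    using exit_idx_leaf_offset[OF assms] by (auto simp: filter_map comp_def)
  have block: "mset (map (\<lambda>m. (lsplit (Node cs) m, rsplit (Node cs) m))
        (map (\<lambda>m. leaf_offset cs j + m) ?block)) = split_block cs j"
    unfolding split_block_def splittings_def mset_map[symmetric] map_map
    by (rule arg_cong[where f = mset], rule map_cong)
       (auto simp: splitting_Node_leaf_offset[OF assms] simp del: upt_Suc)
  show ?thesis
    unfolding filtered using block
    by (cases "Q j") (simp_all only: if_True if_False list.map mset.simps)
qed

lemma mset_filter_splittings_Node:
  "mset (map (\<lambda>m. (lsplit (Node cs) m, rsplit (Node cs) m))
     (filter (\<lambda>m. Q (exit_idx cs m)) [1..<Suc (nleaves (Node cs))]))
   = (\<Sum>j | j < length cs \<and> Q j. split_block cs j)"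
proof -
  have "[1..<Suc (nleaves (Node cs))]
      = concat (map (\<lambda>j. map (\<lambda>m. leaf_offset cs j + m) [1..<Suc (nleaves (cs ! j))])
          [0..<length cs])"
    using upt_leaves_Node[of 0 cs] by simp
  then have "mset (map (\<lambda>m. (lsplit (Node cs) m, rsplit (Node cs) m))
              (filter (\<lambda>m. Q (exit_idx cs m)) [1..<Suc (nleaves (Node cs))]))
      = (\<Sum>j\<leftarrow>[0..<length cs]. mset (map (\<lambda>m. (lsplit (Node cs) m, rsplit (Node cs) m))
           (filter (\<lambda>m. Q (exit_idx cs m))
             (map (\<lambda>m. leaf_offset cs j + m) [1..<Suc (nleaves (cs ! j))]))))"
    by (simp only: filter_concat map_concat mset_concat map_map comp_def)
  also have "\<dots> = (\<Sum>j\<leftarrow>[0..<length cs]. if Q j then split_block cs j else {#})"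
    by (rule arg_cong[where f = sum_list], rule map_cong)
       (simp_all only: mset_filter_splittings_block set_upt atLeastLessThan_iff)
  also have "\<dots> = (\<Sum>j | j < length cs \<and> Q j. split_block cs j)"
    by (simp add: sum_set_upt_conv_sum_list_nat[symmetric] sum.inter_filter[symmetric]
        lessThan_atLeast0)
  finally show ?thesis .
qed

lemma splittings_Node: "splittings (Node cs) = (\<Sum>j<length cs. split_block cs j)"
proof (cases "cs = []")
  case False
  then show ?thesis
    using mset_filter_splittings_Node[where Q = "\<lambda>_. True"]
    by (simp add: splittings_def lessThan_def)
qed (simp add: splittings_def)

lemma splittings_Leaf: "splittings Leaf = {#(Leaf, Leaf)#}"
  by (simp add: splittings_def lsplit.simps rsplit.simps)

lemma inj_graft_left: "inj (graft_left cs j)"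
  by (auto simp: inj_def graft_left_def)

lemma inj_graft_right: "inj (graft_right cs j)"
  by (auto simp: inj_def graft_right_def)

lemma count_split_block_graft:
  "count (split_block cs j) (graft_left cs j a, graft_right cs j b)
   = count (splittings (cs ! j)) (a, b)"
  using count_image_mset_inj[OF prod.inj_map[OF inj_graft_left inj_graft_right], where x = "(a, b)"]
  by (simp add: split_block_def)

lemma count_split_block_eq_0:
  "(\<And>a b. (u, v) \<noteq> (graft_left cs j a, graft_right cs j b)) \<Longrightarrow> count (split_block cs j) (u, v) = 0"
  unfolding split_block_def by (rule count_image_mset_notin_range) auto

lemma count_split_block_first:
  assumes "2 \<le> length cs"
  shows "count (split_block cs 0) (u, Node (b # ss))
       = (if ss = tl cs then count (splittings (hd cs)) (u, b) else 0)"
proof -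
  have graft: "graft_left cs 0 a = a" "graft_right cs 0 b = Node (b # tl cs)" for a b
    using assms by (simp_all add: graft_left_def graft_right_def drop_Suc)
  have "hd cs = cs ! 0"
    using assms by (cases cs) auto
  show ?thesis
  proof (cases "ss = tl cs")
    case True
    then show ?thesis
      using count_split_block_graft[of cs 0 u b] \<open>hd cs = cs ! 0\<close> by (simp add: graft)
  next
    case False
    then show ?thesis
      by (simp add: count_split_block_eq_0 graft)
  qed
qed

lemma count_split_block_last:
  assumes "2 \<le> length cs"
  shows "count (split_block cs (length cs - 1)) (Node (ps @ [a]), v)
       = (if ps = butlast cs then count (splittings (last cs)) (a, v) else 0)"
proof -
  define k where "k = length cs - 1"
  have graft: "graft_left cs k a = Node (butlast cs @ [a])" "graft_right cs k b = b" for a b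
    using assms by (simp_all add: k_def graft_left_def graft_right_def butlast_conv_take)
  have "cs ! k = last cs"
    using assms by (cases cs rule: rev_exhaust) (auto simp: k_def)
  then show ?thesis
    unfolding k_def[symmetric]
    using count_split_block_graft[of cs k a v] by (auto simp: graft intro: count_split_block_eq_0)
qed

lemma count_split_block_middle:
  assumes "0 < j" "j < length cs - 1"
  shows "count (split_block cs j) (Node (ps @ [a]), Node (b # ss))
       = (if ps = take j cs \<and> ss = drop (Suc j) cs then count (splittings (cs ! j)) (a, b) else 0)"
proof -
  have graft: "graft_left cs j a = Node (take j cs @ [a])"
      "graft_right cs j b = Node (b # drop (Suc j) cs)" for a b
    using assms by (simp_all add: graft_left_def graft_right_def)
  show ?thesis
    using count_split_block_graft[of cs j a b] by (auto simp: graft intro: count_split_block_eq_0)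
qed

lemma count_split_blocks_middle:
  assumes "ps \<noteq> []" "ss \<noteq> []"
  shows "(\<Sum>j\<in>{1..<length cs - 1}. count (split_block cs j) (Node (ps @ [a]), Node (b # ss)))
       = (if \<exists>c. cs = ps @ c # ss then count (splittings (cs ! length ps)) (a, b) else 0)"
    (is "?sum = (if ?graft then ?count else 0)")
proof -
  have "?sum = (\<Sum>j\<in>{1..<length cs - 1}. if j = length ps then if ?graft then ?count else 0 else 0)"
  proof (rule sum.cong [OF refl])
    fix j
    assume j: "j \<in> {1..<length cs - 1}"
    then have "cs = take j cs @ cs ! j # drop (Suc j) cs"
      by (intro id_take_nth_drop) auto
    then show "count (split_block cs j) (Node (ps @ [a]), Node (b # ss))
        = (if j = length ps then if ?graft then ?count else 0 else 0)"
      using j by (auto simp: count_split_block_middle)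
  qed
  also have "\<dots> = (if ?graft then ?count else 0)"
    using assms by (auto simp: Suc_le_eq)
  finally show ?thesis .
qed

lemma count_split_block_Leaf_left: "0 < j \<Longrightarrow> count (split_block cs j) (Leaf, v) = 0"
  by (rule count_split_block_eq_0) (simp add: graft_left_def)

lemma count_split_block_Leaf_right: "j < length cs - 1 \<Longrightarrow> count (split_block cs j) (u, Leaf) = 0"
  by (rule count_split_block_eq_0) (simp add: graft_right_def)

lemma count_splittings_Leaf_left:
  "wf_tree t \<Longrightarrow> count (splittings t) (Leaf, v) = (if v = t then 1 else 0)"
proof (induction t arbitrary: v)
  case Leaf
  then show ?case
    by (simp add: splittings_Leaf)
next
  case (Node cs)
  have len: "2 \<le> length cs" and "list_all wf_tree cs"
    using Node.prems by simp_all
  then have hd: "hd cs \<in> set cs" "wf_tree (hd cs)" and cs: "cs = hd cs # tl cs"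
    by (cases cs; simp)+
  have "count (split_block cs 0) (Leaf, v) = (if v = Node cs then 1 else 0)"
  proof (cases "\<exists>b ss. v = Node (b # ss)")
    case True
    then obtain b ss where "v = Node (b # ss)"
      by blast
    then show ?thesis
      using count_split_block_first[OF len] Node.IH[OF hd] cs by (metis list.inject ptree.inject)
  next
    case False
    then show ?thesis
      using len cs by (auto intro!: count_split_block_eq_0 simp: graft_left_def graft_right_def)
  qed
  then show ?case
    using len
    by (simp add: splittings_Node count_sum sum_lessThan_first_middle_last
        count_split_block_Leaf_left)
qed

lemma count_splittings_Leaf_right:
  "wf_tree t \<Longrightarrow> count (splittings t) (u, Leaf) = (if u = t then 1 else 0)"
proof (induction t arbitrary: u)
  case Leaf
  then show ?case
    by (simp add: splittings_Leaf)
next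
  case (Node cs)
  have len: "2 \<le> length cs" and "list_all wf_tree cs"
    using Node.prems by simp_all
  then have last: "last cs \<in> set cs" "wf_tree (last cs)" and cs: "cs = butlast cs @ [last cs]"
    by (cases cs rule: rev_exhaust; simp)+
  have "count (split_block cs (length cs - 1)) (u, Leaf) = (if u = Node cs then 1 else 0)"
  proof (cases "\<exists>ps a. u = Node (ps @ [a])")
    case True
    then obtain ps a where "u = Node (ps @ [a])"
      by blast
    then show ?thesis
      using count_split_block_last[OF len] Node.IH[OF last] cs
      by (metis append1_eq_conv ptree.inject)
  next
    case False
    then show ?thesis
      using len cs by (auto intro!: count_split_block_eq_0 simp: graft_left_def graft_right_def)
  qed
  then show ?case
    using len
    by (simp add: splittings_Node count_sum sum_lessThan_first_middle_last
        count_split_block_Leaf_right)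
qed

lemma wf_tree_graft_left:
  "wf_tree (Node cs) \<Longrightarrow> j < length cs \<Longrightarrow> wf_tree a \<Longrightarrow> wf_tree (graft_left cs j a)"
  by (auto simp: graft_left_def list_all_iff dest: in_set_takeD)

lemma wf_tree_graft_right:
  "wf_tree (Node cs) \<Longrightarrow> j < length cs \<Longrightarrow> wf_tree b \<Longrightarrow> wf_tree (graft_right cs j b)"
  by (auto simp: graft_right_def list_all_iff dest: in_set_dropD)

lemma wf_tree_splittings: "wf_tree t \<Longrightarrow> (u, v) \<in># splittings t \<Longrightarrow> wf_tree u \<and> wf_tree v"
proof (induction t arbitrary: u v)
  case Leaf
  then show ?case
    by (simp add: splittings_Leaf)
next
  case (Node cs)
  then obtain j a b where j: "j < length cs" and ab: "(a, b) \<in># splittings (cs ! j)"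
    and uv: "u = graft_left cs j a" "v = graft_right cs j b"
    by (auto simp: splittings_Node set_mset_sum split_block_def)
  have "wf_tree a \<and> wf_tree b"
    using Node.IH[OF nth_mem[OF j] _ ab] Node.prems(1) j by (simp add: list_all_iff)
  then show ?case
    using Node.prems(1) j by (simp add: uv wf_tree_graft_left wf_tree_graft_right)
qed

lemma count_image_mset_Node_graft:
  "count (image_mset (\<lambda>z. Node (ps @ z # ss)) M) (Node cs)
   = (if \<exists>c. cs = ps @ c # ss then count M (cs ! length ps) else 0)"
proof (cases "\<exists>c. cs = ps @ c # ss")
  case True
  then obtain c where "cs = ps @ c # ss"
    by blast
  moreover have "inj (\<lambda>z. Node (ps @ z # ss))"
    by (auto intro: injI)
  ultimately show ?thesis
    using count_image_mset_inj by fastforce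
next
  case False
  then show ?thesis
    by (auto intro: count_image_mset_notin_range)
qed

lemma star_Leaf_right: "star u Leaf = {#u#}"
  by (cases u) simp_all

lemma count_star_Leaf: "count (star u v) Leaf = (if u = Leaf \<and> v = Leaf then 1 else 0)"
  by (cases "(u, v)" rule: star.cases) (auto intro: count_image_mset_notin_range)

lemma lprod_Node_snoc: "lprod (Node (ps @ [a])) v = image_mset (\<lambda>z. Node (ps @ [z])) (star a v)"
  by (cases v) (simp_all add: star_Leaf_right)

lemma rprod_Node_Cons: "rprod u (Node (b # ss)) = image_mset (\<lambda>z. Node (z # ss)) (star u b)"
  by (cases u) simp_all

lemma dprod_Node_Node:
  "dprod (Node (ps @ [a])) (Node (b # ss)) = image_mset (\<lambda>z. Node (ps @ z # ss)) (star a b)"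
  by simp

lemma count_lprod_Node_snoc:
  assumes "2 \<le> length cs" and "count (star a v) (last cs) = count (splittings (last cs)) (a, v)"
  shows "count (lprod (Node (ps @ [a])) v) (Node cs)
       = count (split_block cs (length cs - 1)) (Node (ps @ [a]), v)"
proof -
  have "cs = butlast cs @ [last cs]"
    using assms(1) by (cases cs rule: rev_exhaust) auto
  then have "(\<exists>c. cs = ps @ [c]) \<longleftrightarrow> ps = butlast cs" and "ps = butlast cs \<Longrightarrow> cs ! length ps = last cs"
    by (metis append1_eq_conv nth_append_length)+
  then show ?thesis
    unfolding lprod_Node_snoc count_image_mset_Node_graft count_split_block_last[OF assms(1)]
    using assms(2) by simp
qed

lemma count_rprod_Node_Cons:
  assumes "2 \<le> length cs" and "count (star u b) (hd cs) = count (splittings (hd cs)) (u, b)"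
  shows "count (rprod u (Node (b # ss))) (Node cs) = count (split_block cs 0) (u, Node (b # ss))"
proof -
  have "cs = hd cs # tl cs"
    using assms(1) by (cases cs) auto
  then have "(\<exists>c. cs = c # ss) \<longleftrightarrow> ss = tl cs" and "ss = tl cs \<Longrightarrow> cs ! 0 = hd cs"
    by (metis list.inject nth_Cons_0)+
  then show ?thesis
    unfolding rprod_Node_Cons count_image_mset_Node_graft[of "[]" ss, simplified]
      count_split_block_first[OF assms(1)]
    using assms(2) by simp
qed

lemma count_dprod_Node_Node:
  assumes "ps \<noteq> []" "ss \<noteq> []"
    and "\<And>c. c \<in> set cs \<Longrightarrow> count (star a b) c = count (splittings c) (a, b)"
  shows "count (dprod (Node (ps @ [a])) (Node (b # ss))) (Node cs)
       = (\<Sum>j\<in>{1..<length cs - 1}. count (split_block cs j) (Node (ps @ [a]), Node (b # ss)))"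
  unfolding count_split_blocks_middle[OF assms(1,2)] dprod_Node_Node count_image_mset_Node_graft
  using assms(3) by auto

lemma wf_tree_Node_snocE:
  assumes "wf_tree (Node xs)"
  obtains ps a where "xs = ps @ [a]" "ps \<noteq> []" "wf_tree a"
  using assms by (cases xs rule: rev_exhaust) (auto simp: Suc_le_eq)

lemma wf_tree_Node_ConsE:
  assumes "wf_tree (Node ys)"
  obtains b ss where "ys = b # ss" "ss \<noteq> []" "wf_tree b"
  using assms by (cases ys) (auto simp: Suc_le_eq)

lemma star_Node_Node:
  "xs \<noteq> [] \<Longrightarrow> ys \<noteq> [] \<Longrightarrow>
   star (Node xs) (Node ys)
   = lprod (Node xs) (Node ys) + dprod (Node xs) (Node ys) + rprod (Node xs) (Node ys)"
  by simp

theorem count_star_eq_count_splittings: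
  "wf_tree u \<Longrightarrow> wf_tree v \<Longrightarrow> wf_tree t \<Longrightarrow> count (star u v) t = count (splittings t) (u, v)"
proof (induction u v arbitrary: t rule: star.induct)
  case (1 v t)
  then show ?case
    by (simp add: count_splittings_Leaf_left)
next
  case (2 xs t)
  then show ?case
    by (simp add: count_splittings_Leaf_right)
next
  case (3 xs ys t)
  obtain ps a where xs: "xs = ps @ [a]" and "ps \<noteq> []" "wf_tree a"
    using "3.prems"(1) by (rule wf_tree_Node_snocE)
  obtain b ss where ys: "ys = b # ss" and "ss \<noteq> []" "wf_tree b"
    using "3.prems"(2) by (rule wf_tree_Node_ConsE)
  show ?case
  proof (cases t)
    case Leaf
    then show ?thesis
      by (simp add: count_star_Leaf splittings_Leaf del: star.simps)
  next
    case (Node cs)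
    have "2 \<le> length cs" and wf_cs: "\<forall>c\<in>set cs. wf_tree c"
      using "3.prems"(3) Node by (simp_all add: list_all_iff)
    then have "hd cs \<in> set cs" "last cs \<in> set cs"
      by (cases cs; simp)+
    then have
      "count (star a (Node ys)) (last cs) = count (splittings (last cs)) (a, Node ys)"
      "\<And>c. c \<in> set cs \<Longrightarrow> count (star a b) c = count (splittings c) (a, b)"
      "count (star (Node xs) b) (hd cs) = count (splittings (hd cs)) (Node xs, b)"
      using "3.IH" "3.prems" wf_cs \<open>wf_tree a\<close> \<open>wf_tree b\<close> by (simp_all add: xs ys)
    then have "count (star (Node xs) (Node ys)) t
        = count (split_block cs (length cs - 1)) (Node xs, Node ys)
          + (\<Sum>j\<in>{1..<length cs - 1}. count (split_block cs j) (Node xs, Node ys))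
          + count (split_block cs 0) (Node xs, Node ys)"
      using \<open>2 \<le> length cs\<close> \<open>ps \<noteq> []\<close> \<open>ss \<noteq> []\<close>
      by (simp add: Node xs ys star_Node_Node count_lprod_Node_snoc count_dprod_Node_Node
          count_rprod_Node_Cons del: star.simps lprod.simps dprod.simps rprod.simps)
    also have "\<dots> = count (splittings t) (Node xs, Node ys)"
      using \<open>2 \<le> length cs\<close>
      by (simp add: Node splittings_Node count_sum sum_lessThan_first_middle_last)
    finally show ?thesis .
  qed
qed

lemma count_lprod_eq_count_split_block:
  assumes "wf_tree u" "wf_tree v" "wf_tree (Node cs)"
  shows "count (lprod u v) (Node cs) = count (split_block cs (length cs - 1)) (u, v)"
proof (cases u)
  case Leaf
  then show ?thesis
    using assms(3) by (simp add: count_split_block_Leaf_left)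
next
  case (Node xs)
  with assms(1) obtain ps a where "u = Node (ps @ [a])" "wf_tree a"
    by (metis wf_tree_Node_snocE)
  moreover have "wf_tree (last cs)"
    using assms(3) by (cases cs rule: rev_exhaust) auto
  ultimately show ?thesis
    using assms by (simp add: count_lprod_Node_snoc count_star_eq_count_splittings del: lprod.simps)
qed

lemma count_rprod_eq_count_split_block:
  assumes "wf_tree u" "wf_tree v" "wf_tree (Node cs)"
  shows "count (rprod u v) (Node cs) = count (split_block cs 0) (u, v)"
proof (cases v)
  case Leaf
  then show ?thesis
    using assms(3) by (cases u) (simp_all add: count_split_block_Leaf_right)
next
  case (Node ys)
  with assms(2) obtain b ss where "v = Node (b # ss)" "wf_tree b"
    by (metis wf_tree_Node_ConsE)
  moreover have "wf_tree (hd cs)"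
    using assms(3) by (cases cs) auto
  ultimately show ?thesis
    using assms by (simp add: count_rprod_Node_Cons count_star_eq_count_splittings del: rprod.simps)
qed

lemma count_dprod_eq_sum_count_split_block:
  assumes "wf_tree u" "wf_tree v" "wf_tree (Node cs)"
  shows "count (dprod u v) (Node cs) = (\<Sum>j\<in>{1..<length cs - 1}. count (split_block cs j) (u, v))"
proof (cases "u = Leaf \<or> v = Leaf")
  case True
  then show ?thesis
    by (cases u; cases v) (auto simp: count_split_block_Leaf_left count_split_block_Leaf_right)
next
  case False
  with assms(1,2) obtain xs ys
    where "u = Node xs" "v = Node ys" "wf_tree (Node xs)" "wf_tree (Node ys)"
    by (cases u; cases v) auto
  moreover obtain ps a where "xs = ps @ [a]" "ps \<noteq> []" "wf_tree a"
    using \<open>wf_tree (Node xs)\<close> by (rule wf_tree_Node_snocE)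
  moreover obtain b ss where "ys = b # ss" "ss \<noteq> []" "wf_tree b"
    using \<open>wf_tree (Node ys)\<close> by (rule wf_tree_Node_ConsE)
  moreover have "\<forall>c\<in>set cs. wf_tree c"
    using assms(3) by (simp add: list_all_iff)
  ultimately show ?thesis
    using assms by (simp add: count_dprod_Node_Node count_star_eq_count_splittings del: dprod.simps)
qed

lemma sum_tens_apply:
  "distinct ms \<Longrightarrow>
   (\<Sum>m\<in>set ms. tens (l m) (r m)) p = of_nat (count (mset (map (\<lambda>m. (l m, r m)) ms)) p)"
  by (induction ms) (auto simp: tens_def sum_fun_apply)

lemma Delta_eq_Delta_op_star: "t \<noteq> Leaf \<Longrightarrow> Delta t = Delta_op star t"
  by (auto simp: Delta_def Delta_op_def)

lemma Delta_op_Node_eq_sum_tens: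
  assumes wf: "wf_tree (Node cs)" and J: "J = {j. j < length cs \<and> Q j}"
    and op: "\<And>u v. wf_tree u \<Longrightarrow> wf_tree v \<Longrightarrow>
      count (op u v) (Node cs) = (\<Sum>j\<in>J. count (split_block cs j) (u, v))"
  shows "Delta_op op (Node cs)
       = (\<Sum>m\<in>{m \<in> {1..nleaves (Node cs)}. Q (exit_idx cs m)}.
            tens (lsplit (Node cs) m) (rsplit (Node cs) m))"
    (is "_ = ?sum")
proof
  fix p :: "ptree \<times> ptree"
  obtain u v where p: "p = (u, v)"
    by fastforce
  let ?ms = "filter (\<lambda>m. Q (exit_idx cs m)) [1..<Suc (nleaves (Node cs))]"
  have "{m \<in> {1..nleaves (Node cs)}. Q (exit_idx cs m)} = set ?ms"
    by auto
  then have "?sum p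
      = of_nat (count (mset (map (\<lambda>m. (lsplit (Node cs) m, rsplit (Node cs) m)) ?ms)) (u, v))"
    unfolding p by (simp only: sum_tens_apply distinct_filter distinct_upt)
  also have "\<dots> = of_nat (\<Sum>j\<in>J. count (split_block cs j) (u, v))"
    by (simp only: mset_filter_splittings_Node count_sum J)
  also have "\<dots> = Delta_op op (Node cs) p"
  proof -
    have "(\<Sum>j\<in>J. count (split_block cs j) (u, v)) \<le> count (splittings (Node cs)) (u, v)"
      unfolding splittings_Node count_sum J by (rule sum_mono2) auto
    moreover have "count (splittings (Node cs)) (u, v) = 0"
      if "\<not> (wf_tree u \<and> wf_tree v \<and> \<not> (u = Leaf \<and> v = Leaf))"
      using that wf_tree_splittings[OF wf, of u v] count_splittings_Leaf_left[OF wf, of Leaf]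
      by (auto simp: count_eq_zero_iff)
    ultimately show ?thesis
      by (auto simp: Delta_op_def p op simp del: of_nat_sum)
  qed
  finally show "Delta_op op (Node cs) p = ?sum p"
    by (rule sym)
qed

lemma Delta_Node_eq_sum_tens:
  assumes "wf_tree (Node cs)"
  shows "(Delta (Node cs) :: ptree \<times> ptree \<Rightarrow> 'k::field)
       = (\<Sum>m\<in>{1..nleaves (Node cs)}. tens (lsplit (Node cs) m) (rsplit (Node cs) m))"
proof -
  have "(Delta_op star (Node cs) :: ptree \<times> ptree \<Rightarrow> 'k)
      = (\<Sum>m\<in>{m \<in> {1..nleaves (Node cs)}. True}. tens (lsplit (Node cs) m) (rsplit (Node cs) m))"
    by (rule Delta_op_Node_eq_sum_tens[OF assms, where J = "{..<length cs}"])
       (auto simp: count_star_eq_count_splittings[OF _ _ assms] splittings_Node count_sum)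
  moreover have "{m \<in> {1..nleaves (Node cs)}. True} = {1..nleaves (Node cs)}"
    by blast
  ultimately show ?thesis
    by (simp only: Delta_eq_Delta_op_star ptree.distinct not_False_eq_True)
qed

lemma Delta_op_lprod_Node_eq_sum_tens:
  assumes "wf_tree (Node cs)"
  shows "Delta_op lprod (Node cs)
       = (\<Sum>m\<in>{m \<in> {1..nleaves (Node cs)}. exit_idx cs m = length cs - 1}.
            tens (lsplit (Node cs) m) (rsplit (Node cs) m))"
  by (rule Delta_op_Node_eq_sum_tens[OF assms, where J = "{length cs - 1}"])
     (use assms in \<open>auto simp: count_lprod_eq_count_split_block\<close>)

lemma Delta_op_rprod_Node_eq_sum_tens:
  assumes "wf_tree (Node cs)"
  shows "Delta_op rprod (Node cs)
       = (\<Sum>m\<in>{m \<in> {1..nleaves (Node cs)}. exit_idx cs m = 0}.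
            tens (lsplit (Node cs) m) (rsplit (Node cs) m))"
  by (rule Delta_op_Node_eq_sum_tens[OF assms, where J = "{0}"])
     (use assms in \<open>auto simp: count_rprod_eq_count_split_block\<close>)

lemma Delta_op_dprod_Node_eq_sum_tens:
  assumes "wf_tree (Node cs)"
  shows "Delta_op dprod (Node cs)
       = (\<Sum>m\<in>{m \<in> {1..nleaves (Node cs)}. exit_idx cs m \<noteq> 0 \<and> exit_idx cs m \<noteq> length cs - 1}.
            tens (lsplit (Node cs) m) (rsplit (Node cs) m))"
  by (rule Delta_op_Node_eq_sum_tens[OF assms, where J = "{1..<length cs - 1}"])
     (use assms in \<open>auto simp: count_dprod_eq_sum_count_split_block\<close>)

theorem mainTheorem10:
  fixes t :: ptree
  assumes "wf_tree t" and "t \<noteq> Leaf"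
  shows "(Delta t :: ptree \<times> ptree \<Rightarrow> 'k::field)
           = (\<Sum>m\<in>{1..nleaves t}. tens (lsplit t m) (rsplit t m))
       \<and> (Delta_op lprod t :: ptree \<times> ptree \<Rightarrow> 'k)
           = (\<Sum>m\<in>{m \<in> {1..nleaves t}. exit_idx (children t) m = length (children t) - 1}.
                tens (lsplit t m) (rsplit t m))
       \<and> (Delta_op rprod t :: ptree \<times> ptree \<Rightarrow> 'k)
           = (\<Sum>m\<in>{m \<in> {1..nleaves t}. exit_idx (children t) m = 0}.
                tens (lsplit t m) (rsplit t m))
       \<and> (Delta_op dprod t :: ptree \<times> ptree \<Rightarrow> 'k)
           = (\<Sum>m\<in>{m \<in> {1..nleaves t}. exit_idx (children t) m \<noteq> 0
                     \<and> exit_idx (children t) m \<noteq> length (children t) - 1}.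
                tens (lsplit t m) (rsplit t m))"
proof -
  obtain cs where t: "t = Node cs"
    using assms(2) by (cases t) auto
  with assms(1) have "wf_tree (Node cs)"
    by simp
  then show ?thesis
    unfolding t children.simps
    by (intro conjI Delta_Node_eq_sum_tens Delta_op_lprod_Node_eq_sum_tens
        Delta_op_rprod_Node_eq_sum_tens Delta_op_dprod_Node_eq_sum_tens)
qed

end
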